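(* Let $g$ be a meromorphic function on the Riemann sphere $\mathbb{C}\cup\{\infty\}$, with $|g|\not\equiv 1$, whose set of distinct poles is $\{p_1,\dots,p_n\}$. Then there exists a holomorphic $1$-form $\omega$ on $M=\mathbb{C}\cup\{\infty\}\setminus\{p_1,\dots,p_n\}$ such that $(g,\omega)$ is the Weierstrass data of a maximal map $X:M\to\mathbb{E}^3_1$ all of whose $n$ ends $p_1,\dots,p_n$ are complete. In other words, there is a complete maximal map with $n$ complete ends whose Gauss map is $g$.
   Context: $\mathbb{E}^3_1$ denotes $\mathbb{R}^3$ with the Lorentzian metric $dx^2+dy^2-dz^2$. Weierstrass data and maximal maps: let $M$ be a Riemann surface, $g$ a meromorphic function on $M$ and $\omega$ a holomorphic $1$-form on $M$ such that (i) whenever $p$ is a pole of $g$ of order $k$, $\omega$ has a zero of order at least $2k$ at $p$; (ii) $|g|\not\equiv 1$; (iii) $\mathrm{Re}\oint_\gamma\big((1+g^2)\omega,\ i(1-g^2)\omega,\ -2g\omega\big)=0$ for every closed loop $\gamma$ in $M$ (the period condition). The maximal map with Weierstrass data $(g,\omega)$ is $X(p)=\mathrm{Re}\int_{p_0}^{p}\big((1+g^2)\omega,\ i(1-g^2)\omega,\ -2g\omega\big)$, and $g$ is called its Gauss map. Its induced metric is $ds^2=(1-|g|^2)^2|\omega|^2$. The singularity set is $\{p\in M:|g(p)|=1\}$ and the branch points are the zeros of $\omega$. A maximal map defined on $\overline{M}\setminus\{p_1,\dots,p_n\}$ ($\overline{M}$ compact) is called complete (and the $p_i$ are called complete ends)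 if $g$ and $\omega$ extend meromorphically to each $p_i$, $|g(p_i)|\neq 1$ for all $i$, and the metric $ds^2$ is complete at each end $p_i$. *)

theory Defs
  imports "HOL-Complex_Analysis.Complex_Analysis" "HOL-Probability.Probability"
begin

text \<open>The Riemann sphere is modelled by the affine chart z (points of the complex
plane) together with the point at infinity, handled through the chart w = 1/z.
A meromorphic function on the sphere is a function g :: complex => complex which is
meromorphic on the whole plane, holomorphic (analytic) away from its poles, and
meromorphic at infinity, i.e. w |-> g(1/w) is meromorphic at w = 0.
Values of g at its poles are irrelevant junk.\<close>

definition pole_at_inf :: "(complex \<Rightarrow> complex) \<Rightarrow> bool" where
  "pole_at_inf g \<longleftrightarrow> is_pole (\<lambda>w. g (inverse w)) 0"

definition meromorphic_on_sphere :: "(complex \<Rightarrow> complex) \<Rightarrow> bool" where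
  "meromorphic_on_sphere g \<longleftrightarrow>
     g meromorphic_on UNIV \<and> g analytic_on {z. \<not> is_pole g z} \<and>
     (\<lambda>w. g (inverse w)) meromorphic_on {0}"

text \<open>A 1-form omega is represented by its coefficient f in the chart z: omega = f(z) dz.
In the chart w = 1/z at infinity, omega = chart_inf f (w) dw.\<close>

definition chart_inf :: "(complex \<Rightarrow> complex) \<Rightarrow> complex \<Rightarrow> complex" where
  "chart_inf f w = - f (inverse w) / w ^ 2"

text \<open>M = sphere minus the poles of g.  Its finite part is {z. not is_pole g z};
infinity belongs to M iff infinity is not a pole of g.
Holomorphic 1-form on M: holomorphic in the chart z on the finite part, and (if infinity
is in M) holomorphic at w = 0 in the chart w, i.e. the isolated singularity of
chart_inf f at 0 is removable.\<close>

definition holomorphic_form_on_M :: "(complex \<Rightarrow> complex) \<Rightarrow> (complex \<Rightarrow> complex) \<Rightarrow> bool" where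
  "holomorphic_form_on_M g f \<longleftrightarrow>
     f analytic_on {z. \<not> is_pole g z} \<and>
     (\<not> pole_at_inf g \<longrightarrow> (\<exists>c. (chart_inf f \<longlongrightarrow> c) (at 0)))"

definition period_condition :: "(complex \<Rightarrow> complex) \<Rightarrow> (complex \<Rightarrow> complex) \<Rightarrow> bool" where
  "period_condition g f \<longleftrightarrow>
     (\<forall>\<gamma>. valid_path \<gamma> \<and> pathfinish \<gamma> = pathstart \<gamma> \<and> path_image \<gamma> \<subseteq> {z. \<not> is_pole g z} \<longrightarrow>
        Re (contour_integral \<gamma> (\<lambda>z. (1 + (g z)\<^sup>2) * f z)) = 0 \<and>
        Re (contour_integral \<gamma> (\<lambda>z. \<i> * (1 - (g z)\<^sup>2) * f z)) = 0 \<and>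
        Re (contour_integral \<gamma> (\<lambda>z. - 2 * g z * f z)) = 0)"

text \<open>(g, omega) is the Weierstrass data of a maximal map on M = sphere minus poles of g:
omega holomorphic on M, |g| not identically 1 on M, and the period condition.
(Condition (i) is vacuous, since g has no poles in M.)\<close>

definition weierstrass_data_on_M :: "(complex \<Rightarrow> complex) \<Rightarrow> (complex \<Rightarrow> complex) \<Rightarrow> bool" where
  "weierstrass_data_on_M g f \<longleftrightarrow>
     holomorphic_form_on_M g f \<and>
     (\<exists>z. \<not> is_pole g z \<and> cmod (g z) \<noteq> 1) \<and>
     period_condition g f"

text \<open>Length of a curve gamma : [0,1) -> M in the induced metric
ds = |1 - |g|^2| |omega| (the metric is chart independent).\<close>

definition metric_length :: "(complex \<Rightarrow> complex) \<Rightarrow> (complex \<Rightarrow> complex) \<Rightarrow> (real \<Rightarrow> complex) \<Rightarrow> ennreal" where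
  "metric_length g f \<gamma> =
     (\<integral>\<^sup>+ t. indicator {0..<1} t *
        ennreal (\<bar>1 - (cmod (g (\<gamma> t)))\<^sup>2\<bar> * cmod (f (\<gamma> t)) * norm (vector_derivative \<gamma> (at t)))
      \<partial>lborel)"

text \<open>The metric is complete at the end described by the filter F (nhds p for a finite
pole p, at_infinity for the point infinity): every piecewise smooth curve in M that
diverges to the end has infinite length.  (Such a curve eventually lies in the finite part
of M, so only curves there are considered.)\<close>

definition complete_at_end :: "(complex \<Rightarrow> complex) \<Rightarrow> (complex \<Rightarrow> complex) \<Rightarrow> complex filter \<Rightarrow> bool" where
  "complete_at_end g f F \<longleftrightarrow>
     (\<forall>\<gamma>. (\<forall>b<1. \<gamma> piecewise_C1_differentiable_on {0..b}) \<and>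
          \<gamma> ` {0..<1} \<subseteq> {z. \<not> is_pole g z} \<and> filterlim \<gamma> F (at_left 1)
          \<longrightarrow> metric_length g f \<gamma> = \<infinity>)"

text \<open>All ends (= poles of g) are complete ends: omega extends meromorphically to each end,
|g(p_i)| = infinity is automatically different from 1, and the metric is complete there.\<close>

definition all_ends_complete :: "(complex \<Rightarrow> complex) \<Rightarrow> (complex \<Rightarrow> complex) \<Rightarrow> bool" where
  "all_ends_complete g f \<longleftrightarrow>
     (\<forall>p. is_pole g p \<longrightarrow> f meromorphic_on {p} \<and> complete_at_end g f (nhds p)) \<and>
     (pole_at_inf g \<longrightarrow> chart_inf f meromorphic_on {0} \<and> complete_at_end g f at_infinity)"

end

theory Submission
  imports Defs
begin

text \<open>Take \<omega> = dg.  Each period integrand is then exact on M, being the differential of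
g + g^3/3, \<i>(g - g^3/3) and -g^2 respectively, so all periods vanish.  At every end g tends
to \<infinity>, so eventually |1 - |g|^2| \<ge> 3/4 |g|^2 and the length of a curve running into the
end is at least the change of g^3/4 along it, which is unbounded.  In the chart w = 1/z at
infinity, dg becomes d(g \<circ> inverse), which is holomorphic at 0 unless infinity is a pole.\<close>

lemma ennreal_norm_le_nn_integral_norm:
  fixes f :: "real \<Rightarrow> 'a::euclidean_space"
  assumes "(f has_integral I) {a..b}"
  shows "ennreal (norm I) \<le> (\<integral>\<^sup>+t. indicator {a..b} t * ennreal (norm (f t)) \<partial>lborel)"
proof -
  define N where "N = (\<lambda>t. if t \<in> {a..b} then norm (f t) else 0)"
  have int: "f integrable_on {a..b}"
    using assms by blast
  have "(\<lambda>t. norm (f t)) \<in> borel_measurable (lebesgue_on {a..b})"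
    using integrable_imp_measurable[OF int] by measurable
  then have N_meas: "N \<in> borel_measurable lebesgue"
    unfolding N_def by (subst borel_measurable_if) auto
  have eq: "(\<integral>\<^sup>+t. indicator {a..b} t * ennreal (norm (f t)) \<partial>lborel) = (\<integral>\<^sup>+t. ennreal (N t) \<partial>lborel)"
    by (intro nn_integral_cong) (auto simp: N_def indicator_def)
  show ?thesis
  proof (cases "(\<integral>\<^sup>+t. ennreal (N t) \<partial>lborel)")
    case (real r)
    then have "(N has_integral r) UNIV"
      using N_meas by (subst has_integral_iff_nn_integral_lebesgue)
        (auto simp: N_def nn_integral_completion)
    then have N_int: "((\<lambda>t. norm (f t)) has_integral r) {a..b}"
      unfolding N_def by (simp only: has_integral_restrict_UNIV)
    have "norm (integral {a..b} f) \<le> integral {a..b} (\<lambda>t. norm (f t))"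
      by (rule integral_norm_bound_integral) (use int N_int in auto)
    then have "norm I \<le> r"
      using assms N_int by (simp add: integral_unique)
    then show ?thesis
      using eq real by simp
  qed (simp add: eq)
qed

lemma has_integral_comp_piecewise_C1:
  fixes \<gamma> :: "real \<Rightarrow> 'a::{real_normed_field,banach}"
  assumes \<gamma>: "\<gamma> piecewise_C1_differentiable_on {a..b}" and "a \<le> b"
    and F: "\<And>t. t \<in> {a..b} \<Longrightarrow> (F has_field_derivative F' (\<gamma> t)) (at (\<gamma> t))"
  shows "((\<lambda>t. vector_derivative \<gamma> (at t) * F' (\<gamma> t)) has_integral F (\<gamma> b) - F (\<gamma> a)) {a..b}"
proof -
  obtain S D where S: "finite S" "continuous_on {a..b} \<gamma>"
    "\<And>t. t \<in> {a..b} - S \<Longrightarrow> (\<gamma> has_vector_derivative D t) (at t)"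
    using \<gamma> unfolding piecewise_C1_differentiable_on_def C1_differentiable_on_def by blast
  show ?thesis
  proof (rule fundamental_theorem_of_calculus_interior_strong[OF S(1) \<open>a \<le> b\<close>])
    fix t assume t: "t \<in> {a<..<b} - S"
    then have "(\<gamma> has_vector_derivative D t) (at t)"
      using S(3) by auto
    then have "(\<gamma> has_vector_derivative vector_derivative \<gamma> (at t)) (at t)"
      by (simp add: vector_derivative_at)
    from field_vector_diff_chain_at[OF this F]
    show "((\<lambda>t. F (\<gamma> t)) has_vector_derivative vector_derivative \<gamma> (at t) * F' (\<gamma> t)) (at t)"
      using t by (simp add: o_def)
  next
    have "continuous_on (\<gamma> ` {a..b}) F"
      using F DERIV_isCont by (fastforce intro!: continuous_at_imp_continuous_on)
    then show "continuous_on {a..b} (\<lambda>t. F (\<gamma> t))"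
      using S(2) by (rule continuous_on_compose2) auto
  qed
qed

lemma three_quarters_sq_le_abs_one_minus_sq:
  fixes x :: real
  assumes "2 \<le> x"
  shows "3/4 * x\<^sup>2 \<le> \<bar>1 - x\<^sup>2\<bar>"
  using power_mono[OF assms, of 2] by simp

lemma norm_diff_cube_le_metric_length:
  fixes g :: "complex \<Rightarrow> complex" and \<gamma> :: "real \<Rightarrow> complex"
  assumes g: "g analytic_on \<gamma> ` {a..b}"
    and \<gamma>: "\<gamma> piecewise_C1_differentiable_on {a..b}"
    and ab: "0 \<le> a" "a \<le> b" "b < 1"
    and large: "\<And>t. t \<in> {a..b} \<Longrightarrow> 2 \<le> norm (g (\<gamma> t))"
  shows "ennreal (norm (g (\<gamma> b) ^ 3 / 4 - g (\<gamma> a) ^ 3 / 4)) \<le> metric_length g (deriv g) \<gamma>"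
proof -
  define dh where "dh = (\<lambda>z. 3/4 * g z ^ 2 * deriv g z)"
  have "((\<lambda>t. vector_derivative \<gamma> (at t) * dh (\<gamma> t)) has_integral
          g (\<gamma> b) ^ 3 / 4 - g (\<gamma> a) ^ 3 / 4) {a..b}"
  proof (rule has_integral_comp_piecewise_C1[OF \<gamma> ab(2), of "\<lambda>z. g z ^ 3 / 4"])
    fix t assume "t \<in> {a..b}"
    then have "(g has_field_derivative deriv g (\<gamma> t)) (at (\<gamma> t))"
      using g by (intro analytic_derivI) (auto intro: analytic_on_subset)
    then show "((\<lambda>z. g z ^ 3 / 4) has_field_derivative dh (\<gamma> t)) (at (\<gamma> t))"
      unfolding dh_def by (auto intro!: derivative_eq_intros simp: field_simps)
  qed
  then have "ennreal (norm (g (\<gamma> b) ^ 3 / 4 - g (\<gamma> a) ^ 3 / 4))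
      \<le> (\<integral>\<^sup>+t. indicator {a..b} t * ennreal (norm (vector_derivative \<gamma> (at t) * dh (\<gamma> t))) \<partial>lborel)"
    by (rule ennreal_norm_le_nn_integral_norm)
  also have "\<dots> \<le> metric_length g (deriv g) \<gamma>"
    unfolding metric_length_def
  proof (intro nn_integral_mono)
    fix t :: real
    show "indicator {a..b} t * ennreal (norm (vector_derivative \<gamma> (at t) * dh (\<gamma> t)))
      \<le> indicator {0..<1} t * ennreal (\<bar>1 - (cmod (g (\<gamma> t)))\<^sup>2\<bar> * cmod (deriv g (\<gamma> t)) *
            norm (vector_derivative \<gamma> (at t)))"
    proof (cases "t \<in> {a..b}")
      case True
      have "3/4 * (norm (g (\<gamma> t)))\<^sup>2 * (cmod (deriv g (\<gamma> t)) * norm (vector_derivative \<gamma> (at t)))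
          \<le> \<bar>1 - (cmod (g (\<gamma> t)))\<^sup>2\<bar> * (cmod (deriv g (\<gamma> t)) * norm (vector_derivative \<gamma> (at t)))"
        using True large by (intro mult_right_mono three_quarters_sq_le_abs_one_minus_sq) auto
      then show ?thesis
        using True ab by (auto simp: dh_def norm_mult norm_power mult_ac intro: ennreal_leI)
    qed simp
  qed
  finally show ?thesis .
qed

lemma metric_length_eq_infinity_if_tendsto_infinity:
  fixes g :: "complex \<Rightarrow> complex" and \<gamma> :: "real \<Rightarrow> complex"
  assumes g: "g analytic_on {z. \<not> is_pole g z}"
    and \<gamma>: "\<forall>b<1. \<gamma> piecewise_C1_differentiable_on {0..b}"
    and img: "\<gamma> ` {0..<1} \<subseteq> {z. \<not> is_pole g z}"
    and lim: "filterlim (\<lambda>t. g (\<gamma> t)) at_infinity (at_left 1)"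
  shows "metric_length g (deriv g) \<gamma> = \<infinity>"
proof (rule ccontr)
  assume "metric_length g (deriv g) \<gamma> \<noteq> \<infinity>"
  then obtain r where r: "metric_length g (deriv g) \<gamma> = ennreal r" "0 \<le> r"
    by (cases "metric_length g (deriv g) \<gamma>") auto
  have "\<forall>\<^sub>F t in at_left 1. 2 \<le> norm (g (\<gamma> t))"
    using lim by (auto simp: filterlim_at_infinity[of 0])
  then obtain t0 where t0: "t0 < 1" "\<And>t. t0 < t \<Longrightarrow> t < 1 \<Longrightarrow> 2 \<le> norm (g (\<gamma> t))"
    by (auto simp: eventually_at_left_field)
  define a where "a = max 0 ((t0 + 1) / 2)"
  have a: "0 \<le> a" "t0 < a" "a < 1"
    using t0(1) by (auto simp: a_def max_def)
  define c where "c = g (\<gamma> a) ^ 3 / 4"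
  have bounded: "norm (g (\<gamma> b) ^ 3 / 4 - c) \<le> r" if "a \<le> b" "b < 1" for b
  proof -
    have "ennreal (norm (g (\<gamma> b) ^ 3 / 4 - c)) \<le> ennreal r"
      unfolding c_def r(1)[symmetric]
    proof (rule norm_diff_cube_le_metric_length)
      have "{a..b} \<subseteq> {0..<1}"
        using a that by auto
      then have "\<gamma> ` {a..b} \<subseteq> {z. \<not> is_pole g z}"
        using img by (meson image_mono order_trans)
      then show "g analytic_on \<gamma> ` {a..b}"
        by (rule analytic_on_subset[OF g])
      have "\<gamma> piecewise_C1_differentiable_on {0..b}"
        using \<gamma> that by simp
      then show "\<gamma> piecewise_C1_differentiable_on {a..b}"
        by (rule piecewise_C1_differentiable_on_subset) (use a in auto)
      show "2 \<le> norm (g (\<gamma> t))" if "t \<in> {a..b}" for t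
        using a \<open>b < 1\<close> that by (intro t0(2)) auto
    qed (use a that in auto)
    then show ?thesis
      using r(2) by simp
  qed
  have "filterlim (\<lambda>b. g (\<gamma> b) ^ 3) at_infinity (at_left 1)"
    using lim by (rule Limits.filterlim_power_at_infinity) simp
  then have "filterlim (\<lambda>b. 1/4 * g (\<gamma> b) ^ 3 + - c) at_infinity (at_left 1)"
    by (intro tendsto_add_filterlim_at_infinity' tendsto_mult_filterlim_at_infinity tendsto_const) auto
  then have "filterlim (\<lambda>b. norm (g (\<gamma> b) ^ 3 / 4 - c)) at_top (at_left 1)"
    by (auto dest: filterlim_at_infinity_imp_norm_at_top)
  then have "\<forall>\<^sub>F b in at_left 1. r + 1 \<le> norm (g (\<gamma> b) ^ 3 / 4 - c)"
    by (simp add: filterlim_at_top)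
  moreover have "\<forall>\<^sub>F b in at_left (1::real). b \<in> {a<..<1}"
    using a by (intro eventually_at_left_real) auto
  ultimately have "\<forall>\<^sub>F b in at_left (1::real). False"
  proof eventually_elim
    case (elim b)
    then have "norm (g (\<gamma> b) ^ 3 / 4 - c) \<le> r"
      by (intro bounded) auto
    with elim(1) show False
      by linarith
  qed
  then show False
    by (simp add: trivial_limit_at_left_real)
qed

lemma complete_at_end_deriv:
  fixes g :: "complex \<Rightarrow> complex"
  assumes g: "g analytic_on {z. \<not> is_pole g z}"
    and lim: "filterlim g at_infinity (F \<sqinter> principal {z. \<not> is_pole g z})"
  shows "complete_at_end g (deriv g) F"
  unfolding complete_at_end_def
proof (intro allI impI, elim conjE)
  fix \<gamma> :: "real \<Rightarrow> complex"
  assume \<gamma>: "\<forall>b<1. \<gamma> piecewise_C1_differentiable_on {0..b}"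
    and img: "\<gamma> ` {0..<1} \<subseteq> {z. \<not> is_pole g z}"
    and \<gamma>_lim: "filterlim \<gamma> F (at_left 1)"
  have "\<forall>\<^sub>F t in at_left (1::real). t \<in> {0<..<1}"
    by (intro eventually_at_left_real) auto
  then have "\<forall>\<^sub>F t in at_left 1. \<gamma> t \<in> {z. \<not> is_pole g z}"
    by eventually_elim (use img in \<open>auto simp: image_subset_iff\<close>)
  with \<gamma>_lim have "filterlim \<gamma> (F \<sqinter> principal {z. \<not> is_pole g z}) (at_left 1)"
    by (simp add: filterlim_inf filterlim_principal)
  with lim have "filterlim (\<lambda>t. g (\<gamma> t)) at_infinity (at_left 1)"
    by (rule filterlim_compose)
  then show "metric_length g (deriv g) \<gamma> = \<infinity>"
    using g \<gamma> img by (rule metric_length_eq_infinity_if_tendsto_infinity[rotated 3])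
qed

lemma filterlim_at_infinity_if_pole_at_inf:
  assumes "pole_at_inf g"
  shows "filterlim g at_infinity at_infinity"
proof -
  have "filterlim (\<lambda>w. g (inverse w)) at_infinity (filtermap inverse at_infinity)"
    using assms by (simp add: pole_at_inf_def is_pole_def flip: at_to_infinity)
  then show ?thesis
    by (simp add: filterlim_filtermap)
qed

lemma period_condition_deriv:
  fixes g :: "complex \<Rightarrow> complex"
  assumes g: "g analytic_on {z. \<not> is_pole g z}"
  shows "period_condition g (deriv g)"
  unfolding period_condition_def
proof (intro allI impI, elim conjE)
  fix \<gamma> assume \<gamma>: "valid_path \<gamma>" "pathfinish \<gamma> = pathstart \<gamma>"
    "path_image \<gamma> \<subseteq> {z. \<not> is_pole g z}"
  have g': "(g has_field_derivative deriv g z) (at z within {z. \<not> is_pole g z})"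
    if "\<not> is_pole g z" for z
    using g that by (intro analytic_derivI) (auto intro: analytic_on_subset)
  have exact: "contour_integral \<gamma> f = 0"
    if "\<And>z. \<not> is_pole g z \<Longrightarrow> (F has_field_derivative f z) (at z within {z. \<not> is_pole g z})"
    for F f
    using Cauchy_theorem_primitive[of _ F f, OF _ \<gamma>(1,3,2)] that
    by (auto intro: contour_integral_unique)
  have "contour_integral \<gamma> (\<lambda>z. (1 + (g z)\<^sup>2) * deriv g z) = 0"
    by (rule exact[of "\<lambda>z. g z + g z ^ 3 / 3"])
      (auto intro!: derivative_eq_intros g' simp: field_simps power2_eq_square)
  moreover have "contour_integral \<gamma> (\<lambda>z. \<i> * (1 - (g z)\<^sup>2) * deriv g z) = 0"
    by (rule exact[of "\<lambda>z. \<i> * (g z - g z ^ 3 / 3)"])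
      (auto intro!: derivative_eq_intros g' simp: field_simps power2_eq_square)
  moreover have "contour_integral \<gamma> (\<lambda>z. - 2 * g z * deriv g z) = 0"
    by (rule exact[of "\<lambda>z. - (g z)\<^sup>2"])
      (auto intro!: derivative_eq_intros g' simp: field_simps power2_eq_square)
  ultimately show "Re (contour_integral \<gamma> (\<lambda>z. (1 + (g z)\<^sup>2) * deriv g z)) = 0 \<and>
      Re (contour_integral \<gamma> (\<lambda>z. \<i> * (1 - (g z)\<^sup>2) * deriv g z)) = 0 \<and>
      Re (contour_integral \<gamma> (\<lambda>z. - 2 * g z * deriv g z)) = 0"
    by simp
qed

lemma chart_inf_deriv:
  fixes g :: "complex \<Rightarrow> complex"
  assumes "w \<noteq> 0" "(\<lambda>w. g (inverse w)) analytic_on {w}"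
  shows "chart_inf (deriv g) w = deriv (\<lambda>w. g (inverse w)) w"
proof -
  define q where "q = (\<lambda>w. g (inverse w))"
  have q': "(q has_field_derivative deriv q w) (at (inverse (inverse w)))"
    using analytic_derivI[OF assms(2)[folded q_def]] by simp
  have inv': "(inverse has_field_derivative - (inverse (inverse w) ^ 2)) (at (inverse w))"
    using assms(1) by (auto intro!: derivative_eq_intros simp: power2_eq_square)
  have "((\<lambda>z. q (inverse z)) has_field_derivative deriv q w * - (w ^ 2)) (at (inverse w))"
    using DERIV_chain2[OF q' inv'] by simp
  then have "deriv g (inverse w) = - deriv q w * w ^ 2"
    by (simp add: q_def DERIV_imp_deriv)
  then show ?thesis
    using assms(1) by (simp add: chart_inf_def q_def)
qed

lemma eventually_chart_inf_deriv_eq: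
  fixes g :: "complex \<Rightarrow> complex"
  assumes "(\<lambda>w. g (inverse w)) meromorphic_on {0}"
  shows "\<forall>\<^sub>F w in at 0. chart_inf (deriv g) w = deriv (\<lambda>w. g (inverse w)) w"
proof -
  have "\<forall>\<^sub>F w in at 0. (\<lambda>w. g (inverse w)) analytic_on {w}"
    using assms by (simp add: meromorphic_at_iff isolated_singularity_at_altdef)
  moreover have "\<forall>\<^sub>F w in at (0::complex). w \<noteq> 0"
    by (simp add: eventually_at_filter)
  ultimately show ?thesis
    by eventually_elim (simp add: chart_inf_deriv)
qed

lemma holomorphic_form_on_M_deriv:
  assumes "meromorphic_on_sphere g"
  shows "holomorphic_form_on_M g (deriv g)"
  unfolding holomorphic_form_on_M_def
proof (intro conjI impI)
  define q where "q = (\<lambda>w. g (inverse w))"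
  have q: "q meromorphic_on {0}" and g: "g analytic_on {z. \<not> is_pole g z}"
    using assms by (auto simp: meromorphic_on_sphere_def q_def)
  show "deriv g analytic_on {z. \<not> is_pole g z}"
    using g by (rule analytic_deriv)
  assume "\<not> pole_at_inf g"
  then have "\<not> is_pole (deriv q) 0"
    using q by (simp add: is_pole_deriv_iff pole_at_inf_def q_def)
  moreover have "not_essential (deriv q) 0"
    using q by (simp add: meromorphic_at_iff not_essential_deriv)
  ultimately obtain c where "deriv q \<midarrow>0\<rightarrow> c"
    by (auto simp: not_essential_def)
  then have "chart_inf (deriv g) \<midarrow>0\<rightarrow> c"
    using tendsto_cong[OF eventually_chart_inf_deriv_eq[OF q[unfolded q_def]]]
    by (simp add: q_def)
  then show "\<exists>c. chart_inf (deriv g) \<midarrow>0\<rightarrow> c" ..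
qed

lemma all_ends_complete_deriv:
  assumes "meromorphic_on_sphere g"
  shows "all_ends_complete g (deriv g)"
proof -
  have mer: "g meromorphic_on UNIV" and g: "g analytic_on {z. \<not> is_pole g z}"
    and q: "(\<lambda>w. g (inverse w)) meromorphic_on {0}"
    using assms by (auto simp: meromorphic_on_sphere_def)
  have "complete_at_end g (deriv g) (nhds p)" if p: "is_pole g p" for p
  proof -
    have "nhds p \<sqinter> principal {z. \<not> is_pole g z} \<le> at p"
      unfolding at_within_def using p by (intro inf_mono) auto
    then show ?thesis
      using p g by (intro complete_at_end_deriv) (auto simp: is_pole_def intro: filterlim_mono)
  qed
  moreover have "chart_inf (deriv g) meromorphic_on {0}"
    using meromorphic_on_deriv[OF q] eventually_chart_inf_deriv_eq[OF q]
      meromorphic_on_cong[of "{0}" "chart_inf (deriv g)"] by blast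
  moreover have "complete_at_end g (deriv g) at_infinity" if "pole_at_inf g"
    using g filterlim_at_infinity_if_pole_at_inf[OF that]
    by (intro complete_at_end_deriv) (auto intro: filterlim_mono)
  ultimately show ?thesis
    unfolding all_ends_complete_def
    using meromorphic_on_deriv[OF mer] by (auto intro: meromorphic_on_subset)
qed

theorem mainTheorem1:
  fixes g :: "complex \<Rightarrow> complex"
  assumes "meromorphic_on_sphere g"
    and "\<exists>z. \<not> is_pole g z \<and> cmod (g z) \<noteq> 1"
  shows "\<exists>f. weierstrass_data_on_M g f \<and> all_ends_complete g f"
proof -
  have "g analytic_on {z. \<not> is_pole g z}"
    using assms(1) by (simp add: meromorphic_on_sphere_def)
  then have "weierstrass_data_on_M g (deriv g)"
    unfolding weierstrass_data_on_M_def
    using holomorphic_form_on_M_deriv[OF assms(1)] period_condition_deriv assms(2) by blast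
  then show ?thesis
    using all_ends_complete_deriv[OF assms(1)] by blast
qed

end
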